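(* Consider two simple totally unimodular matrices $$A_1=\begin{pmatrix}B&0&0&0\\ b_1^t&1&0&1\\ b_2^t&0&1&1\end{pmatrix},\qquad A_2=\begin{pmatrix}c_1^t&1&0&1\\ c_2^t&0&1&1\\ C&0&0&0\end{pmatrix},$$ where $B\in M_{g_1,n_1}(\mathbb{Z})$, $C\in M_{g_2,n_2}(\mathbb{Z})$ and $b_1,b_2,c_1,c_2$ are integer vectors, and assume that $\overline{Q_i}$ is well-suited for $A_i$ for $i=1,2$. Then one can write $$\overline{Q_1}=\begin{pmatrix}Q_1&r_1&s_1\\ r_1^t&1&-1/2\\ s_1^t&-1/2&1\end{pmatrix},\qquad \overline{Q_2}=\begin{pmatrix}1&-1/2&r_2^t\\ -1/2&1&s_2^t\\ r_2&s_2&Q_2\end{pmatrix}$$ with $Q_i\in M_{g_i,g_i}(\mathbb{R})$ and $r_i,s_i\in\mathbb{R}^{g_i}$, and, setting $$M=\tfrac43\left(r_1r_2^t+s_1s_2^t\right)+\tfrac23\left(r_1s_2^t+s_1r_2^t\right)\in M_{g_1,g_2}(\mathbb{R}),$$ the matrix $$\overline{Q}:=\begin{pmatrix}Q_1&r_1&s_1&M\\ r_1^t&1&-1/2&r_2^t\\ s_1^t&-1/2&1&s_2^t\\ M^t&r_2&s_2&Q_2\end{pmatrix}\ \text{ is well-suited for }\ A=\begin{pmatrix}B&0&0&0&0\\ b_1^t&c_1^t&1&0&1\\ b_2^t&c_2^t&0&1&1\\ 0&C&0&0&0\end{pmatrix}.$$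
   Context: A real matrix is totally unimodular if every square submatrix has determinant $-1,0$ or $1$; it is simple if it has no zero column and no two proportional columns. For a simple totally unimodular $A\in M_{g,n}(\mathbb{Z})$, a symmetric matrix $Q\in M_{g,g}(\mathbb{R})$ is well-suited for $A$ if $Q$ is positive definite and for every $\xi\in\mathbb{Z}^g\setminus\{0\}$ one has $\xi^tQ\xi\ge1$, with equality if and only if $\xi$ or $-\xi$ is a column vector of $A$. *)

theory Defs
  imports "Jordan_Normal_Form.Determinant" "Jordan_Normal_Form.DL_Submatrix"
begin

definition totally_unimodular :: "int mat \<Rightarrow> bool" where
  "totally_unimodular A \<longleftrightarrow>
     (\<forall>I J. I \<subseteq> {..<dim_row A} \<longrightarrow> J \<subseteq> {..<dim_col A} \<longrightarrow> card I = card J \<longrightarrow>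
        det (submatrix A I J) \<in> {-1, 0, 1})"

definition simple_mat :: "int mat \<Rightarrow> bool" where
  "simple_mat A \<longleftrightarrow>
     (\<forall>j < dim_col A. col A j \<noteq> 0\<^sub>v (dim_row A)) \<and>
     (\<forall>i < dim_col A. \<forall>j < dim_col A. i \<noteq> j \<longrightarrow>
        \<not> (\<exists>c::real. map_vec real_of_int (col A i) = c \<cdot>\<^sub>v map_vec real_of_int (col A j)))"

definition positive_definite_mat :: "real mat \<Rightarrow> bool" where
  "positive_definite_mat Q \<longleftrightarrow> square_mat Q \<and>
     (\<forall>x \<in> carrier_vec (dim_row Q). x \<noteq> 0\<^sub>v (dim_row Q) \<longrightarrow> x \<bullet> (Q *\<^sub>v x) > 0)"

definition well_suited :: "real mat \<Rightarrow> int mat \<Rightarrow> bool" where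
  "well_suited Q A \<longleftrightarrow>
     Q \<in> carrier_mat (dim_row A) (dim_row A) \<and> Q = transpose_mat Q \<and>
     positive_definite_mat Q \<and>
     (\<forall>\<xi> \<in> carrier_vec (dim_row A). \<xi> \<noteq> 0\<^sub>v (dim_row A) \<longrightarrow>
        (let q = map_vec real_of_int \<xi> \<bullet> (Q *\<^sub>v map_vec real_of_int \<xi>) in
          q \<ge> 1 \<and> (q = 1 \<longleftrightarrow> (\<exists>j < dim_col A. col A j = \<xi> \<or> col A j = - \<xi>))))"

definition matA1 :: "nat \<Rightarrow> nat \<Rightarrow> int mat \<Rightarrow> int vec \<Rightarrow> int vec \<Rightarrow> int mat" where
  "matA1 g1 n1 B b1 b2 = mat (g1 + 2) (n1 + 3) (\<lambda>(i, j).
     if i < g1 then (if j < n1 then B $$ (i, j) else 0)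
     else if i = g1 then (if j < n1 then b1 $ j else [1, 0, 1] ! (j - n1))
     else (if j < n1 then b2 $ j else [0, 1, 1] ! (j - n1)))"

definition matA2 :: "nat \<Rightarrow> nat \<Rightarrow> int mat \<Rightarrow> int vec \<Rightarrow> int vec \<Rightarrow> int mat" where
  "matA2 g2 n2 C c1 c2 = mat (g2 + 2) (n2 + 3) (\<lambda>(i, j).
     if i = 0 then (if j < n2 then c1 $ j else [1, 0, 1] ! (j - n2))
     else if i = 1 then (if j < n2 then c2 $ j else [0, 1, 1] ! (j - n2))
     else (if j < n2 then C $$ (i - 2, j) else 0))"

definition matA :: "nat \<Rightarrow> nat \<Rightarrow> nat \<Rightarrow> nat \<Rightarrow> int mat \<Rightarrow> int vec \<Rightarrow> int vec
    \<Rightarrow> int mat \<Rightarrow> int vec \<Rightarrow> int vec \<Rightarrow> int mat" where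
  "matA g1 n1 g2 n2 B b1 b2 C c1 c2 = mat (g1 + g2 + 2) (n1 + n2 + 3) (\<lambda>(i, j).
     if i < g1 then (if j < n1 then B $$ (i, j) else 0)
     else if i = g1 then
       (if j < n1 then b1 $ j else if j < n1 + n2 then c1 $ (j - n1) else [1, 0, 1] ! (j - n1 - n2))
     else if i = g1 + 1 then
       (if j < n1 then b2 $ j else if j < n1 + n2 then c2 $ (j - n1) else [0, 1, 1] ! (j - n1 - n2))
     else (if n1 \<le> j \<and> j < n1 + n2 then C $$ (i - g1 - 2, j - n1) else 0))"

definition glued_form :: "nat \<Rightarrow> nat \<Rightarrow> real mat \<Rightarrow> real mat \<Rightarrow> real mat" where
  "glued_form g1 g2 Qb1 Qb2 =
    (let Q1 = (\<lambda>i j. Qb1 $$ (i, j)); r1 = (\<lambda>i. Qb1 $$ (i, g1)); s1 = (\<lambda>i. Qb1 $$ (i, g1 + 1));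
         Q2 = (\<lambda>i j. Qb2 $$ (i + 2, j + 2)); r2 = (\<lambda>i. Qb2 $$ (i + 2, 0)); s2 = (\<lambda>i. Qb2 $$ (i + 2, 1));
         M = (\<lambda>i j. 4/3 * (r1 i * r2 j + s1 i * s2 j) + 2/3 * (r1 i * s2 j + s1 i * r2 j))
     in mat (g1 + g2 + 2) (g1 + g2 + 2) (\<lambda>(i, j).
       if i < g1 then
         (if j < g1 then Q1 i j else if j = g1 then r1 i else if j = g1 + 1 then s1 i
          else M i (j - g1 - 2))
       else if i = g1 then
         (if j < g1 then r1 j else if j = g1 then 1 else if j = g1 + 1 then - 1/2
          else r2 (j - g1 - 2))
       else if i = g1 + 1 then
         (if j < g1 then s1 j else if j = g1 then - 1/2 else if j = g1 + 1 then 1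
          else s2 (j - g1 - 2))
       else
         (if j < g1 then M j (i - g1 - 2) else if j = g1 then r2 (i - g1 - 2)
          else if j = g1 + 1 then s2 (i - g1 - 2) else Q2 (i - g1 - 2) (j - g1 - 2))))"

end

theory Submission
  imports Defs
begin

text \<open>
  The columns \<open>e, e', e + e'\<close> shared by \<open>A\<^sub>1\<close> and \<open>A\<^sub>2\<close> have norm 1, which forces the
  corresponding \<open>2 \<times> 2\<close> block of both forms to be \<open>H = [[1, -1/2], [-1/2, 1]]\<close>, the Gram
  matrix of the hexagonal lattice with norm \<open>hex_form a b = a\<^sup>2 - a b + b\<^sup>2\<close>. Completing the
  square along \<open>H\<close> writes \<open>q\<^sub>i(x, a, b) = s\<^sub>i(x) + hex_form (a + \<rho>\<^sub>i(x)) (b + \<sigma>\<^sub>i(x))\<close> with a Schur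
  complement \<open>s\<^sub>i\<close> and linear \<open>\<rho>\<^sub>i, \<sigma>\<^sub>i\<close>. The block \<open>M\<close> is exactly what makes the glued form
  \<open>q(x, a, b, y) = s\<^sub>1(x) + s\<^sub>2(y) + hex_form (a + \<rho>\<^sub>1(x) + \<rho>\<^sub>2(y)) (b + \<sigma>\<^sub>1(x) + \<sigma>\<^sub>2(y))\<close>.

  Every point of the plane lies within \<open>hex_form\<close>-distance \<open>1/3\<close> of an integer point, so
  \<open>s\<^sub>i(x) \<ge> 2/3\<close> for integral \<open>x \<noteq> 0\<close>. Hence \<open>q \<ge> 4/3\<close> when \<open>x\<close> and \<open>y\<close> are both nonzero, and
  otherwise \<open>q\<close> restricts to \<open>q\<^sub>1\<close> or \<open>q\<^sub>2\<close>. Every column of \<open>A\<close> is supported on one of the two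
  sides, where it is a column of \<open>A\<^sub>1\<close> or of \<open>A\<^sub>2\<close>, so the minimal vectors match as well.
\<close>

section \<open>The hexagonal norm\<close>

definition hex_form :: "real \<Rightarrow> real \<Rightarrow> real" where
  "hex_form x y = x\<^sup>2 - x * y + y\<^sup>2"

lemma hex_form_eq_squares: "hex_form x y = (x - y / 2)\<^sup>2 + 3 / 4 * y\<^sup>2"
  unfolding hex_form_def by (simp add: power2_eq_square algebra_simps)

lemma hex_form_nonneg: "0 \<le> hex_form x y"
  unfolding hex_form_eq_squares by simp

lemma hex_form_commute: "hex_form x y = hex_form y x"
  unfolding hex_form_def by (simp add: algebra_simps)

lemma hex_form_triangle:
  assumes "0 \<le> y" "y \<le> x" "x \<le> 1"
  shows "hex_form x y \<le> 1/3 \<or> hex_form (x - 1) y \<le> 1/3 \<or> hex_form (x - 1) (y - 1) \<le> 1/3"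
proof (rule ccontr)
  assume "\<not> ?thesis"
  \<comment> \<open>\<open>1 - x, x - y, y\<close> are the barycentric coordinates of \<open>(x, y)\<close> with respect to
    \<open>(0, 0), (1, 0), (1, 1)\<close>; with these weights the mean of the three values is at most \<open>1/3\<close>.\<close>
  then have far: "0 < hex_form x y - 1/3" "0 < hex_form (x - 1) y - 1/3" "0 < hex_form (x - 1) (y - 1) - 1/3"
    by auto
  have "(1 - x) * (hex_form x y - 1/3) + (x - y) * (hex_form (x - 1) y - 1/3)
      + y * (hex_form (x - 1) (y - 1) - 1/3) = - ((x - y/2 - 1/2)\<^sup>2 + 3/4 * (y - 1/3)\<^sup>2)"
    unfolding hex_form_def by (simp add: power2_eq_square field_simps)
  also have "\<dots> \<le> 0"
    using zero_le_power2[of "x - y/2 - 1/2"] zero_le_power2[of "y - 1/3"] by linarith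
  also have "0 < (1 - x) * (hex_form x y - 1/3) + (x - y) * (hex_form (x - 1) y - 1/3)
      + y * (hex_form (x - 1) (y - 1) - 1/3)"
  proof -
    have "0 < 1 - x \<or> 0 < x - y \<or> 0 < y"
      using assms by linarith
    then show ?thesis
      using far assms by (smt (verit) mult_nonneg_nonneg mult_pos_pos)
  qed
  finally show False
    by simp
qed

lemma hex_form_covering: "\<exists>z1 z2 :: int. hex_form (of_int z1 + p) (of_int z2 + q) \<le> 1/3"
proof -
  define x where "x = p - of_int \<lfloor>p\<rfloor>"
  define y where "y = q - of_int \<lfloor>q\<rfloor>"
  have x: "0 \<le> x" "x \<le> 1" and y: "0 \<le> y" "y \<le> 1"
    unfolding x_def y_def by linarith+
  have shift: "hex_form (of_int (- \<lfloor>p\<rfloor> - d1) + p) (of_int (- \<lfloor>q\<rfloor> - d2) + q)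
      = hex_form (x - of_int d1) (y - of_int d2)" for d1 d2 :: int
    unfolding x_def y_def by (simp add: algebra_simps)
  have "\<exists>d1 d2 :: int. hex_form (x - of_int d1) (y - of_int d2) \<le> 1/3"
  proof (cases "y \<le> x")
    case True
    then show ?thesis
      using hex_form_triangle[OF y(1) True x(2)]
      by (metis of_int_0 of_int_1 diff_zero)
  next
    case False
    then show ?thesis
      using hex_form_triangle[of x y] x y hex_form_commute
      by (metis linorder_le_cases of_int_0 of_int_1 diff_zero)
  qed
  then show ?thesis
    by (metis shift)
qed

definition symmetric_on :: "real mat \<Rightarrow> nat set \<Rightarrow> bool" where
  "symmetric_on Q J \<longleftrightarrow> (\<forall>i\<in>J. \<forall>j\<in>J. Q $$ (i, j) = Q $$ (j, i))"

definition bform :: "real mat \<Rightarrow> nat set \<Rightarrow> nat set \<Rightarrow> (nat \<Rightarrow> real) \<Rightarrow> real" where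
  "bform Q I J w = (\<Sum>i\<in>I. \<Sum>j\<in>J. w i * Q $$ (i, j) * w j)"

definition qform :: "real mat \<Rightarrow> nat set \<Rightarrow> (nat \<Rightarrow> real) \<Rightarrow> real" where
  "qform Q I w = bform Q I I w"

definition lform :: "real mat \<Rightarrow> nat set \<Rightarrow> nat \<Rightarrow> (nat \<Rightarrow> real) \<Rightarrow> real" where
  "lform Q I k w = (\<Sum>i\<in>I. w i * Q $$ (i, k))"

lemma symmetric_on_subset: "symmetric_on Q J \<Longrightarrow> I \<subseteq> J \<Longrightarrow> symmetric_on Q I"
  unfolding symmetric_on_def by blast

lemma qform_cong:
  "(\<And>i j. i \<in> I \<Longrightarrow> j \<in> I \<Longrightarrow> Q $$ (i, j) = Q' $$ (i, j)) \<Longrightarrow> (\<And>i. i \<in> I \<Longrightarrow> w i = w' i)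
    \<Longrightarrow> qform Q I w = qform Q' I w'"
  unfolding qform_def bform_def by (intro sum.cong) auto

lemma lform_cong:
  "(\<And>i. i \<in> I \<Longrightarrow> Q $$ (i, k) = Q' $$ (i, k)) \<Longrightarrow> (\<And>i. i \<in> I \<Longrightarrow> w i = w' i)
    \<Longrightarrow> lform Q I k w = lform Q' I k w'"
  unfolding lform_def by (intro sum.cong) auto

lemma lform_Un:
  "finite I \<Longrightarrow> finite J \<Longrightarrow> I \<inter> J = {} \<Longrightarrow> lform Q (I \<union> J) k w = lform Q I k w + lform Q J k w"
  unfolding lform_def by (rule sum.union_disjoint)

lemma qform_vanishing_outside:
  assumes "finite I" "J \<subseteq> I" "\<And>i. i \<in> I - J \<Longrightarrow> w i = 0"
  shows "qform Q I w = qform Q J w"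
proof -
  have "(\<Sum>j\<in>I. w i * Q $$ (i, j) * w j) = (\<Sum>j\<in>J. w i * Q $$ (i, j) * w j)" for i
    using assms by (intro sum.mono_neutral_right) auto
  then have "qform Q I w = (\<Sum>i\<in>I. \<Sum>j\<in>J. w i * Q $$ (i, j) * w j)"
    unfolding qform_def bform_def by simp
  also have "\<dots> = qform Q J w"
    unfolding qform_def bform_def using assms by (intro sum.mono_neutral_right) auto
  finally show ?thesis .
qed

lemma qform_reindex:
  assumes "inj_on \<sigma> J" "\<And>i j. i \<in> J \<Longrightarrow> j \<in> J \<Longrightarrow> Q $$ (\<sigma> i, \<sigma> j) = Q' $$ (i, j)"
  shows "qform Q (\<sigma> ` J) w = qform Q' J (w \<circ> \<sigma>)"
  unfolding qform_def bform_def using assms by (simp add: sum.reindex)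

lemma lform_reindex:
  assumes "inj_on \<sigma> J" "\<And>i. i \<in> J \<Longrightarrow> Q $$ (\<sigma> i, \<sigma> k) = Q' $$ (i, k)"
  shows "lform Q (\<sigma> ` J) (\<sigma> k) w = lform Q' J k (w \<circ> \<sigma>)"
  unfolding lform_def using assms by (simp add: sum.reindex)

lemma qform_Un:
  assumes "finite I" "finite J" "I \<inter> J = {}" "symmetric_on Q (I \<union> J)"
  shows "qform Q (I \<union> J) w = qform Q I w + qform Q J w + 2 * bform Q I J w"
proof -
  have "bform Q J I w = bform Q I J w"
    unfolding bform_def using assms(4)
    by (subst sum.swap) (auto simp: symmetric_on_def mult.commute intro!: sum.cong)
  moreover have "qform Q (I \<union> J) w = qform Q I w + bform Q I J w + bform Q J I w + qform Q J w"
    unfolding qform_def bform_def using assms(1-3)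
    by (simp add: sum.union_disjoint sum.distrib)
  ultimately show ?thesis
    by simp
qed

lemma qform_pair:
  assumes "u \<noteq> v" "Q $$ (v, u) = Q $$ (u, v)"
  shows "qform Q {u, v} w = (w u)\<^sup>2 * Q $$ (u, u) + 2 * w u * w v * Q $$ (u, v) + (w v)\<^sup>2 * Q $$ (v, v)"
  unfolding qform_def bform_def using assms by (simp add: power2_eq_square algebra_simps)

lemma bform_pair:
  "u \<noteq> v \<Longrightarrow> bform Q I {u, v} w = lform Q I u w * w u + lform Q I v w * w v"
  unfolding bform_def lform_def by (simp add: sum.distrib sum_distrib_right mult.assoc)

section \<open>Completing the square along a hexagonal block\<close>

lemma hex_form_shift:
  "hex_form (x + (4 * r + 2 * s) / 3) (y + (2 * r + 4 * s) / 3)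
     = hex_form x y + 2 * (r * x + s * y) + 4/3 * (r\<^sup>2 + r * s + s\<^sup>2)"
  unfolding hex_form_def by (simp add: power2_eq_square field_simps)

text \<open>\<open>4/3 [[1, 1/2], [1/2, 1]]\<close> is the inverse of the block \<open>[[1, -1/2], [-1/2, 1]]\<close>.\<close>

definition schur :: "real mat \<Rightarrow> nat set \<Rightarrow> nat \<Rightarrow> nat \<Rightarrow> (nat \<Rightarrow> real) \<Rightarrow> real" where
  "schur Q I u v w = qform Q I w
     - 4/3 * ((lform Q I u w)\<^sup>2 + lform Q I u w * lform Q I v w + (lform Q I v w)\<^sup>2)"

locale hex_block =
  fixes Q :: "real mat" and I :: "nat set" and u v :: nat
  assumes finite_I: "finite I" and u_notin: "u \<notin> I" and v_notin: "v \<notin> I" and u_neq_v: "u \<noteq> v"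
    and symmetric: "symmetric_on Q (insert u (insert v I))"
    and block: "Q $$ (u, u) = 1" "Q $$ (u, v) = -1/2" "Q $$ (v, v) = 1"
begin

lemma qform_complete_square:
  "qform Q (insert u (insert v I)) w = schur Q I u v w
     + hex_form (w u + (4 * lform Q I u w + 2 * lform Q I v w) / 3)
                (w v + (2 * lform Q I u w + 4 * lform Q I v w) / 3)"
proof -
  have split: "insert u (insert v I) = I \<union> {u, v}"
    by auto
  have "qform Q (insert u (insert v I)) w = qform Q I w + qform Q {u, v} w + 2 * bform Q I {u, v} w"
    unfolding split
    by (rule qform_Un) (use finite_I u_notin v_notin symmetric[unfolded split] in auto)
  also have "qform Q {u, v} w = hex_form (w u) (w v)"
  proof -
    have "Q $$ (v, u) = Q $$ (u, v)"
      using symmetric unfolding symmetric_on_def by blast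
    then show ?thesis
      using qform_pair[OF u_neq_v] block unfolding hex_form_def by simp
  qed
  also have "bform Q I {u, v} w = lform Q I u w * w u + lform Q I v w * w v"
    by (rule bform_pair[OF u_neq_v])
  finally show ?thesis
    unfolding schur_def hex_form_shift by (simp add: algebra_simps)
qed

lemma lform_fun_upd: "lform Q I k (w(u := a, v := b)) = lform Q I k w"
  using u_notin v_notin by (intro lform_cong refl) auto

lemma schur_fun_upd: "schur Q I u v (w(u := a, v := b)) = schur Q I u v w"
proof -
  have on_I: "(w(u := a, v := b)) i = w i" if "i \<in> I" for i
  proof -
    have "i \<noteq> u" "i \<noteq> v"
      using that u_notin v_notin by blast+
    then show ?thesis
      by simp
  qed
  have "qform Q I (w(u := a, v := b)) = qform Q I w"
    by (intro qform_cong refl on_I)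
  then show ?thesis
    unfolding schur_def lform_fun_upd by simp
qed

lemma schur_le_qform: "schur Q I u v w \<le> qform Q (insert u (insert v I)) w"
  unfolding qform_complete_square by (simp add: hex_form_nonneg)

lemma schur_pos:
  assumes pos: "\<And>w. \<exists>j\<in>insert u (insert v I). w j \<noteq> 0 \<Longrightarrow> 0 < qform Q (insert u (insert v I)) w"
    and "i \<in> I" "w i \<noteq> 0"
  shows "0 < schur Q I u v w"
proof -
  let ?c = "(4 * lform Q I u w + 2 * lform Q I v w) / 3"
    and ?d = "(2 * lform Q I u w + 4 * lform Q I v w) / 3"
  have "i \<noteq> u" "i \<noteq> v"
    using assms(2) u_notin v_notin by blast+
  then have "\<exists>j\<in>insert u (insert v I). (w(u := - ?c, v := - ?d)) j \<noteq> 0"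
    using assms(2,3) by auto
  then have "0 < qform Q (insert u (insert v I)) (w(u := - ?c, v := - ?d))"
    by (rule pos)
  also have "\<dots> = schur Q I u v w"
    unfolding qform_complete_square schur_fun_upd lform_fun_upd
    using u_neq_v by (simp add: hex_form_def)
  finally show ?thesis .
qed

lemma schur_of_int_ge:
  assumes int: "\<And>f. \<exists>j\<in>insert u (insert v I). f j \<noteq> 0
      \<Longrightarrow> 1 \<le> qform Q (insert u (insert v I)) (\<lambda>j. of_int (f j))"
    and "i \<in> I" "f i \<noteq> 0"
  shows "2/3 \<le> schur Q I u v (\<lambda>j. of_int (f j))"
proof -
  define w where "w = (\<lambda>j. real_of_int (f j))"
  let ?c = "(4 * lform Q I u w + 2 * lform Q I v w) / 3"
    and ?d = "(2 * lform Q I u w + 4 * lform Q I v w) / 3"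
  obtain z1 z2 :: int where z: "hex_form (of_int z1 + ?c) (of_int z2 + ?d) \<le> 1/3"
    using hex_form_covering by blast
  have "i \<noteq> u" "i \<noteq> v"
    using assms(2) u_notin v_notin by blast+
  then have "\<exists>j\<in>insert u (insert v I). (f(u := z1, v := z2)) j \<noteq> 0"
    using assms(2,3) by auto
  then have "1 \<le> qform Q (insert u (insert v I)) (\<lambda>j. of_int ((f(u := z1, v := z2)) j))"
    by (rule int)
  also have "(\<lambda>j. real_of_int ((f(u := z1, v := z2)) j)) = w(u := of_int z1, v := of_int z2)"
    unfolding w_def by auto
  also have "qform Q (insert u (insert v I)) \<dots> = schur Q I u v w + hex_form (of_int z1 + ?c) (of_int z2 + ?d)"
    unfolding qform_complete_square schur_fun_upd lform_fun_upd
    using u_neq_v by simp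
  finally show ?thesis
    using z unfolding w_def by linarith
qed

end

section \<open>Well-suited forms as quadratic forms on functions\<close>

definition signed_column :: "int mat \<Rightarrow> (nat \<Rightarrow> int) \<Rightarrow> bool" where
  "signed_column A f \<longleftrightarrow> (\<exists>j<dim_col A. \<exists>s\<in>{1, -1}. \<forall>i<dim_row A. A $$ (i, j) = s * f i)"

lemma signed_column_cong:
  "(\<And>i. i < dim_row A \<Longrightarrow> f i = f' i) \<Longrightarrow> signed_column A f \<longleftrightarrow> signed_column A f'"
  unfolding signed_column_def by auto

lemma signed_column_vec:
  assumes "\<xi> \<in> carrier_vec (dim_row A)"
  shows "(\<exists>j<dim_col A. col A j = \<xi> \<or> col A j = - \<xi>) \<longleftrightarrow> signed_column A (\<lambda>i. \<xi> $ i)"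
  using assms unfolding signed_column_def by (auto simp: vec_eq_iff)

lemma inner_mult_mat_vec_qform:
  assumes "Q \<in> carrier_mat n n" "x \<in> carrier_vec n"
  shows "x \<bullet> (Q *\<^sub>v x) = qform Q {..<n} (\<lambda>i. x $ i)"
  using assms unfolding qform_def bform_def
  by (auto simp: scalar_prod_def sum_distrib_left atLeast0LessThan mult.assoc intro!: sum.cong)

lemma inner_mult_mat_of_int_vec_qform:
  assumes "Q \<in> carrier_mat n n" "\<xi> \<in> carrier_vec n"
  shows "map_vec real_of_int \<xi> \<bullet> (Q *\<^sub>v map_vec real_of_int \<xi>) = qform Q {..<n} (\<lambda>i. of_int (\<xi> $ i))"
proof -
  have "map_vec real_of_int \<xi> \<bullet> (Q *\<^sub>v map_vec real_of_int \<xi>) = qform Q {..<n} (\<lambda>i. map_vec real_of_int \<xi> $ i)"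
    using assms by (simp add: inner_mult_mat_vec_qform)
  also have "\<dots> = qform Q {..<n} (\<lambda>i. of_int (\<xi> $ i))"
    by (intro qform_cong refl) (use assms(2) in auto)
  finally show ?thesis .
qed

lemma transpose_eq_iff_symmetric_on:
  assumes "Q \<in> carrier_mat n n"
  shows "Q = transpose_mat Q \<longleftrightarrow> symmetric_on Q {..<n}"
proof
  assume "Q = transpose_mat Q"
  then show "symmetric_on Q {..<n}"
    using assms unfolding symmetric_on_def by (metis carrier_matD index_transpose_mat(1) lessThan_iff)
next
  assume "symmetric_on Q {..<n}"
  then show "Q = transpose_mat Q"
    using assms unfolding symmetric_on_def by (intro eq_matI) auto
qed

lemma positive_definite_mat_iff:
  assumes "Q \<in> carrier_mat n n"
  shows "positive_definite_mat Q \<longleftrightarrow> (\<forall>w. (\<exists>i<n. w i \<noteq> 0) \<longrightarrow> 0 < qform Q {..<n} w)"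
proof -
  have "(\<forall>x\<in>carrier_vec n. x \<noteq> 0\<^sub>v n \<longrightarrow> 0 < x \<bullet> (Q *\<^sub>v x)) \<longleftrightarrow> (\<forall>w. (\<exists>i<n. w i \<noteq> 0) \<longrightarrow> 0 < qform Q {..<n} w)"
  proof safe
    fix w :: "nat \<Rightarrow> real" and i
    assume "\<forall>x\<in>carrier_vec n. x \<noteq> 0\<^sub>v n \<longrightarrow> 0 < x \<bullet> (Q *\<^sub>v x)" "i < n" "w i \<noteq> 0"
    then have "0 < vec n w \<bullet> (Q *\<^sub>v vec n w)"
      by (metis vec_carrier index_vec index_zero_vec(1))
    also have "vec n w \<bullet> (Q *\<^sub>v vec n w) = qform Q {..<n} (\<lambda>i. vec n w $ i)"
      using assms by (simp add: inner_mult_mat_vec_qform)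
    also have "\<dots> = qform Q {..<n} w"
      by (rule qform_cong) auto
    finally show "0 < qform Q {..<n} w" .
  next
    fix x :: "real vec"
    assume "\<forall>w. (\<exists>i<n. w i \<noteq> 0) \<longrightarrow> 0 < qform Q {..<n} w" "x \<in> carrier_vec n" "x \<noteq> 0\<^sub>v n"
    then show "0 < x \<bullet> (Q *\<^sub>v x)"
      using assms by (auto simp: inner_mult_mat_vec_qform vec_eq_iff)
  qed
  then show ?thesis
    using assms unfolding positive_definite_mat_def by auto
qed

lemma well_suited_iff:
  assumes "dim_row A = n"
  shows "well_suited Q A \<longleftrightarrow> Q \<in> carrier_mat n n \<and> symmetric_on Q {..<n}
    \<and> (\<forall>w. (\<exists>i<n. w i \<noteq> 0) \<longrightarrow> 0 < qform Q {..<n} w)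
    \<and> (\<forall>f. (\<exists>i<n. f i \<noteq> 0) \<longrightarrow> 1 \<le> qform Q {..<n} (\<lambda>i. of_int (f i))
         \<and> (qform Q {..<n} (\<lambda>i. of_int (f i)) = 1 \<longleftrightarrow> signed_column A f))"
proof (cases "Q \<in> carrier_mat n n")
  case False
  then show ?thesis
    using assms unfolding well_suited_def by auto
next
  case Q: True
  have lattice_condition_iff:
    "(\<forall>\<xi>\<in>carrier_vec n. \<xi> \<noteq> 0\<^sub>v n \<longrightarrow>
        (let q = map_vec real_of_int \<xi> \<bullet> (Q *\<^sub>v map_vec real_of_int \<xi>) in
          1 \<le> q \<and> (q = 1 \<longleftrightarrow> (\<exists>j<dim_col A. col A j = \<xi> \<or> col A j = - \<xi>))))
     \<longleftrightarrow> (\<forall>f. (\<exists>i<n. f i \<noteq> 0) \<longrightarrow> 1 \<le> qform Q {..<n} (\<lambda>i. of_int (f i))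
         \<and> (qform Q {..<n} (\<lambda>i. of_int (f i)) = 1 \<longleftrightarrow> signed_column A f))" (is "?V \<longleftrightarrow> ?F")
  proof
    assume V: ?V
    show ?F
    proof (intro allI impI)
      fix f :: "nat \<Rightarrow> int"
      assume "\<exists>i<n. f i \<noteq> 0"
      then have "vec n f \<noteq> 0\<^sub>v n"
        by (auto simp: vec_eq_iff)
      moreover have "qform Q {..<n} (\<lambda>i. of_int (vec n f $ i)) = qform Q {..<n} (\<lambda>i. of_int (f i))"
        by (rule qform_cong) auto
      moreover have "signed_column A (\<lambda>i. vec n f $ i) \<longleftrightarrow> signed_column A f"
        using assms by (intro signed_column_cong) auto
      ultimately show "1 \<le> qform Q {..<n} (\<lambda>i. of_int (f i))
          \<and> (qform Q {..<n} (\<lambda>i. of_int (f i)) = 1 \<longleftrightarrow> signed_column A f)"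
        using V inner_mult_mat_of_int_vec_qform[OF Q vec_carrier] signed_column_vec[of "vec n f" A] assms
        unfolding Let_def by auto
    qed
  next
    assume F: ?F
    show ?V
    proof (intro ballI impI)
      fix \<xi> :: "int vec"
      assume \<xi>: "\<xi> \<in> carrier_vec n" "\<xi> \<noteq> 0\<^sub>v n"
      then have "\<exists>i<n. \<xi> $ i \<noteq> 0"
        by (auto simp: vec_eq_iff)
      then show "let q = map_vec real_of_int \<xi> \<bullet> (Q *\<^sub>v map_vec real_of_int \<xi>) in
          1 \<le> q \<and> (q = 1 \<longleftrightarrow> (\<exists>j<dim_col A. col A j = \<xi> \<or> col A j = - \<xi>))"
        using F inner_mult_mat_of_int_vec_qform[OF Q \<xi>(1)] signed_column_vec[of \<xi> A] \<xi>(1) assms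
        unfolding Let_def by auto
    qed
  qed
  show ?thesis
    using Q assms lattice_condition_iff unfolding well_suited_def
    by (simp add: transpose_eq_iff_symmetric_on positive_definite_mat_iff)
qed

lemma well_suited_dest:
  assumes "well_suited Q A" "dim_row A = n"
  shows "Q \<in> carrier_mat n n" "symmetric_on Q {..<n}"
    and "\<And>w. \<exists>i<n. w i \<noteq> 0 \<Longrightarrow> 0 < qform Q {..<n} w"
    and "\<And>f. \<exists>i<n. f i \<noteq> 0 \<Longrightarrow> 1 \<le> qform Q {..<n} (\<lambda>i. of_int (f i))"
    and "\<And>f. \<exists>i<n. f i \<noteq> 0 \<Longrightarrow> qform Q {..<n} (\<lambda>i. of_int (f i)) = 1 \<longleftrightarrow> signed_column A f"
  using assms by (simp_all add: well_suited_iff)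

text \<open>For \<open>t = 0, 1, 2\<close> the columns below are \<open>e\<^sub>u\<close>, \<open>e\<^sub>v\<close> and \<open>e\<^sub>u + e\<^sub>v\<close>.\<close>

lemma well_suited_hex_block:
  assumes ws: "well_suited Q A" and uv: "u < dim_row A" "v < dim_row A" "u \<noteq> v"
    and unit_columns: "\<And>t. t < 3 \<Longrightarrow>
      signed_column A (\<lambda>i. if i = u then [1, 0, 1] ! t else if i = v then [0, 1, 1] ! t else 0)"
  shows "Q $$ (u, u) = 1 \<and> Q $$ (u, v) = -1/2 \<and> Q $$ (v, u) = -1/2 \<and> Q $$ (v, v) = 1"
proof -
  note W = well_suited_dest[OF ws refl]
  have sym: "Q $$ (v, u) = Q $$ (u, v)"
    using W(2) uv unfolding symmetric_on_def by (meson lessThan_iff)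
  have unit_value: "(real_of_int a)\<^sup>2 * Q $$ (u, u) + 2 * real_of_int a * real_of_int b * Q $$ (u, v)
      + (real_of_int b)\<^sup>2 * Q $$ (v, v) = 1"
    if t: "t < 3" and ab: "a = [1, 0, 1] ! t" "b = [0, 1, 1] ! t" for t a b
  proof -
    define f where "f = (\<lambda>i. if i = u then a else if i = v then b else 0)"
    have "a \<noteq> 0 \<or> b \<noteq> 0"
      using t ab by (auto simp: less_Suc_eq numeral_3_eq_3)
    then have nonzero: "\<exists>i<dim_row A. f i \<noteq> 0"
      using uv unfolding f_def by auto
    have "signed_column A f"
      using unit_columns[OF t] unfolding f_def ab .
    then have "qform Q {..<dim_row A} (\<lambda>i. of_int (f i)) = 1"
      using W(5)[OF nonzero] by simp
    moreover have "qform Q {..<dim_row A} (\<lambda>i. of_int (f i)) = qform Q {u, v} (\<lambda>i. of_int (f i))"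
      by (rule qform_vanishing_outside) (use uv in \<open>auto simp: f_def\<close>)
    ultimately show ?thesis
      using qform_pair[OF uv(3) sym] uv(3) unfolding f_def by simp
  qed
  have "Q $$ (u, u) = 1" "Q $$ (v, v) = 1" "Q $$ (u, u) + 2 * Q $$ (u, v) + Q $$ (v, v) = 1"
    using unit_value[of 0 1 0] unit_value[of 1 0 1] unit_value[of 2 1 1] by simp_all
  then show ?thesis
    using sym by (intro conjI; linarith)
qed

lemma dim_matA1 [simp]:
  "dim_row (matA1 g1 n1 B b1 b2) = g1 + 2" "dim_col (matA1 g1 n1 B b1 b2) = n1 + 3"
  by (simp_all add: matA1_def)

lemma dim_matA2 [simp]:
  "dim_row (matA2 g2 n2 C c1 c2) = g2 + 2" "dim_col (matA2 g2 n2 C c1 c2) = n2 + 3"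
  by (simp_all add: matA2_def)

lemma dim_matA [simp]:
  "dim_row (matA g1 n1 g2 n2 B b1 b2 C c1 c2) = g1 + g2 + 2"
  "dim_col (matA g1 n1 g2 n2 B b1 b2 C c1 c2) = n1 + n2 + 3"
  by (simp_all add: matA_def)

lemma signed_column_matA1_unit:
  assumes "t < 3"
  shows "signed_column (matA1 g1 n1 B b1 b2)
    (\<lambda>i. if i = g1 then [1, 0, 1] ! t else if i = g1 + 1 then [0, 1, 1] ! t else 0)"
  unfolding signed_column_def using assms
  by (intro exI[of _ "n1 + t"] conjI bexI[of _ 1]) (auto simp: matA1_def)

lemma signed_column_matA2_unit:
  assumes "t < 3"
  shows "signed_column (matA2 g2 n2 C c1 c2)
    (\<lambda>i. if i = 0 then [1, 0, 1] ! t else if i = 1 then [0, 1, 1] ! t else 0)"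
  unfolding signed_column_def using assms
  by (intro exI[of _ "n2 + t"] conjI bexI[of _ 1]) (auto simp: matA2_def)

lemma matA_col_left:
  assumes "j < n1 + 3" "i < g1 + g2 + 2"
  shows "matA g1 n1 g2 n2 B b1 b2 C c1 c2 $$ (i, if j < n1 then j else j + n2)
    = (if i < g1 + 2 then matA1 g1 n1 B b1 b2 $$ (i, j) else 0)"
  using assms by (auto simp: matA_def matA1_def)

lemma matA_col_right:
  assumes "k < n2 + 3" "i < g1 + g2 + 2"
  shows "matA g1 n1 g2 n2 B b1 b2 C c1 c2 $$ (i, n1 + k)
    = (if i < g1 then 0 else matA2 g2 n2 C c1 c2 $$ (i - g1, k))"
  using assms by (auto simp: matA_def matA2_def)

lemma signed_column_matA_left:
  assumes zero: "\<forall>i\<in>{g1 + 2..<g1 + g2 + 2}. f i = 0" and "signed_column (matA1 g1 n1 B b1 b2) f"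
  shows "signed_column (matA g1 n1 g2 n2 B b1 b2 C c1 c2) f"
proof -
  obtain j s where j: "j < n1 + 3" and s: "s \<in> {1, -1}"
    and col: "\<forall>i<g1 + 2. matA1 g1 n1 B b1 b2 $$ (i, j) = s * f i"
    using assms(2) unfolding signed_column_def dim_matA1 by blast
  have "matA g1 n1 g2 n2 B b1 b2 C c1 c2 $$ (i, if j < n1 then j else j + n2) = s * f i"
    if "i < g1 + g2 + 2" for i
    using col zero that by (auto simp: matA_col_left[OF j])
  then show ?thesis
    unfolding signed_column_def using j s by (intro exI[of _ "if j < n1 then j else j + n2"]) auto
qed

lemma signed_column_matA_right:
  assumes zero: "\<forall>i<g1. f i = 0" and "signed_column (matA2 g2 n2 C c1 c2) (\<lambda>k. f (g1 + k))"
  shows "signed_column (matA g1 n1 g2 n2 B b1 b2 C c1 c2) f"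
proof -
  obtain k s where k: "k < n2 + 3" and s: "s \<in> {1, -1}"
    and col: "\<forall>i<g2 + 2. matA2 g2 n2 C c1 c2 $$ (i, k) = s * f (g1 + i)"
    using assms(2) unfolding signed_column_def dim_matA2 by blast
  have "matA g1 n1 g2 n2 B b1 b2 C c1 c2 $$ (i, n1 + k) = s * f i" if "i < g1 + g2 + 2" for i
  proof (cases "i < g1")
    case False
    then have "i - g1 < g2 + 2" "g1 + (i - g1) = i"
      using that by auto
    then show ?thesis
      using col False that by (metis matA_col_right[OF k])
  qed (use zero that in \<open>simp add: matA_col_right[OF k]\<close>)
  then show ?thesis
    unfolding signed_column_def using k s by (intro exI[of _ "n1 + k"]) auto
qed

lemma signed_column_matA_cases:
  assumes "signed_column (matA g1 n1 g2 n2 B b1 b2 C c1 c2) f"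
  shows "(\<forall>i\<in>{g1 + 2..<g1 + g2 + 2}. f i = 0) \<and> signed_column (matA1 g1 n1 B b1 b2) f
    \<or> (\<forall>i<g1. f i = 0) \<and> signed_column (matA2 g2 n2 C c1 c2) (\<lambda>k. f (g1 + k))"
proof -
  obtain j s where j: "j < n1 + n2 + 3" and s: "s \<in> {1, -1}"
    and col: "\<forall>i<g1 + g2 + 2. matA g1 n1 g2 n2 B b1 b2 C c1 c2 $$ (i, j) = s * f i"
    using assms unfolding signed_column_def dim_matA by blast
  have s0: "s \<noteq> 0"
    using s by auto
  show ?thesis
  proof (cases "n1 \<le> j \<and> j < n1 + n2")
    case True
    define k where "k = j - n1"
    have k: "k < n2 + 3" "j = n1 + k"
      using True j unfolding k_def by auto
    have "f i = 0" if "i < g1" for i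
      using col[rule_format, of i] that s0 by (simp add: k(2) matA_col_right[OF k(1)])
    moreover have "matA2 g2 n2 C c1 c2 $$ (i, k) = s * f (g1 + i)" if "i < g2 + 2" for i
      using col[rule_format, of "g1 + i"] that by (simp add: k(2) matA_col_right[OF k(1)])
    ultimately show ?thesis
      unfolding signed_column_def using k s by auto
  next
    case False
    define j' where "j' = (if j < n1 then j else j - n2)"
    have j': "j' < n1 + 3" "j = (if j' < n1 then j' else j' + n2)"
      using False j unfolding j'_def by auto
    have "f i = 0" if "i \<in> {g1 + 2..<g1 + g2 + 2}" for i
      using col[rule_format, of i] that s0 by (simp add: j'(2) matA_col_left[OF j'(1)])
    moreover have "matA1 g1 n1 B b1 b2 $$ (i, j') = s * f i" if "i < g1 + 2" for i
      using col[rule_format, of i] that by (simp add: j'(2) matA_col_left[OF j'(1)])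
    ultimately show ?thesis
      unfolding signed_column_def using j' s by auto
  qed
qed

lemma signed_column_matA:
  "signed_column (matA g1 n1 g2 n2 B b1 b2 C c1 c2) f \<longleftrightarrow>
      (\<forall>i\<in>{g1 + 2..<g1 + g2 + 2}. f i = 0) \<and> signed_column (matA1 g1 n1 B b1 b2) f
    \<or> (\<forall>i<g1. f i = 0) \<and> signed_column (matA2 g2 n2 C c1 c2) (\<lambda>k. f (g1 + k))"
  using signed_column_matA_cases signed_column_matA_left signed_column_matA_right by metis

section \<open>The glued form\<close>

lemma lessThan_add_two_eq_left: "{..<(g::nat) + 2} = insert g (insert (g + 1) {..<g})"
  by auto

lemma lessThan_add_two_eq_right: "{..<(g::nat) + 2} = insert 0 (insert 1 {2..<g + 2})"
  by auto

lemma lessThan_glued_eq: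
  "{..<(g1::nat) + g2 + 2} = insert g1 (insert (g1 + 1) ({..<g1} \<union> (+) g1 ` {2..<g2 + 2}))"
proof -
  have "{g1 + 2..<g1 + g2 + 2} = (+) g1 ` {2..<g2 + 2}"
    by (simp add: image_add_atLeastLessThan ac_simps)
  moreover have "{..<g1 + g2 + 2} = {..<g1} \<union> {g1, g1 + 1} \<union> {g1 + 2..<g1 + g2 + 2}"
    by auto
  ultimately show ?thesis
    by auto
qed

lemma glued_support_cases:
  fixes f :: "nat \<Rightarrow> 'a::zero"
  obtains "\<forall>i\<in>{g1 + 2..<g1 + g2 + 2}. f i = 0" | "\<forall>i<g1. f i = 0"
    | "\<exists>i<g1. f i \<noteq> 0" "\<exists>k\<in>{2..<g2 + 2}. f (g1 + k) \<noteq> 0"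
proof -
  have "\<exists>k\<in>{2..<g2 + 2}. f (g1 + k) \<noteq> 0" if "i \<in> {g1 + 2..<g1 + g2 + 2}" "f i \<noteq> 0" for i
    using that by (intro bexI[of _ "i - g1"]) auto
  then show ?thesis
    using that by blast
qed

locale gluing =
  fixes g1 n1 g2 n2 :: nat and B C :: "int mat" and b1 b2 c1 c2 :: "int vec" and Q1 Q2 :: "real mat"
  assumes ws1: "well_suited Q1 (matA1 g1 n1 B b1 b2)"
    and ws2: "well_suited Q2 (matA2 g2 n2 C c1 c2)"
begin

abbreviation G :: "real mat" where
  "G \<equiv> glued_form g1 g2 Q1 Q2"

lemmas ws1_dest = well_suited_dest[OF ws1 dim_matA1(1)]
   and ws2_dest = well_suited_dest[OF ws2 dim_matA2(1)]

lemma block1: "Q1 $$ (g1, g1) = 1 \<and> Q1 $$ (g1, g1 + 1) = -1/2 \<and> Q1 $$ (g1 + 1, g1) = -1/2 \<and> Q1 $$ (g1 + 1, g1 + 1) = 1"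
  by (rule well_suited_hex_block[OF ws1]) (simp_all add: signed_column_matA1_unit)

lemma block2: "Q2 $$ (0, 0) = 1 \<and> Q2 $$ (0, 1) = -1/2 \<and> Q2 $$ (1, 0) = -1/2 \<and> Q2 $$ (1, 1) = 1"
  by (rule well_suited_hex_block[OF ws2]) (simp_all add: signed_column_matA2_unit)

lemma sym1: "i < g1 + 2 \<Longrightarrow> j < g1 + 2 \<Longrightarrow> Q1 $$ (i, j) = Q1 $$ (j, i)"
  using ws1_dest(2) unfolding symmetric_on_def by (meson lessThan_iff)

lemma sym2: "i < g2 + 2 \<Longrightarrow> j < g2 + 2 \<Longrightarrow> Q2 $$ (i, j) = Q2 $$ (j, i)"
  using ws2_dest(2) unfolding symmetric_on_def by (meson lessThan_iff)

lemma glued_left: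
  assumes "i < g1 + 2" "j < g1 + 2"
  shows "G $$ (i, j) = Q1 $$ (i, j)"
proof -
  have "i < g1 \<or> i = g1 \<or> i = g1 + 1" "j < g1 \<or> j = g1 \<or> j = g1 + 1"
    using assms by auto
  then show ?thesis
    using block1 sym1[OF assms] by (auto simp: glued_form_def Let_def)
qed

lemma glued_right:
  assumes "k < g2 + 2" "l < g2 + 2"
  shows "G $$ (g1 + k, g1 + l) = Q2 $$ (k, l)"
proof -
  have "k = 0 \<or> k = 1 \<or> (\<exists>m. k = m + 2)" "l = 0 \<or> l = 1 \<or> (\<exists>m. l = m + 2)"
    by presburger+
  then show ?thesis
    using assms block2 sym2[OF assms] by (elim disjE exE) (auto simp: glued_form_def Let_def)
qed

lemma glued_cross:
  assumes "i < g1" "2 \<le> k" "k < g2 + 2"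
  shows "G $$ (i, g1 + k) =
     4/3 * (Q1 $$ (i, g1) * Q2 $$ (k, 0) + Q1 $$ (i, g1 + 1) * Q2 $$ (k, 1))
   + 2/3 * (Q1 $$ (i, g1) * Q2 $$ (k, 1) + Q1 $$ (i, g1 + 1) * Q2 $$ (k, 0))"
proof -
  obtain m where "k = m + 2"
    using assms(2) by (metis le_add_diff_inverse2)
  then show ?thesis
    using assms by (simp add: glued_form_def Let_def)
qed

lemma glued_carrier: "G \<in> carrier_mat (g1 + g2 + 2) (g1 + g2 + 2)"
  by (simp add: glued_form_def Let_def)

lemma glued_symmetric: "symmetric_on G {..<g1 + g2 + 2}"
proof -
  have "G $$ (i, j) = G $$ (j, i)" if "i < g1 + g2 + 2" "j < g1 + g2 + 2" for i j
    using that sym1[of i j] sym2[of "i - g1 - 2 + 2" "j - g1 - 2 + 2"] by (auto simp: glued_form_def Let_def)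
  then show ?thesis
    unfolding symmetric_on_def by blast
qed

lemma hex_block_left: "hex_block Q1 {..<g1} g1 (g1 + 1)"
  by unfold_locales (use block1 ws1_dest(2)[unfolded lessThan_add_two_eq_left] in auto)

lemma hex_block_right: "hex_block Q2 {2..<g2 + 2} 0 1"
  by unfold_locales (use block2 ws2_dest(2)[unfolded lessThan_add_two_eq_right] in auto)

lemma hex_block_glued: "hex_block G ({..<g1} \<union> (+) g1 ` {2..<g2 + 2}) g1 (g1 + 1)"
  by unfold_locales
    (use glued_symmetric[unfolded lessThan_glued_eq] in \<open>auto simp: glued_form_def Let_def\<close>)

lemma schur_left_pos:
  assumes "i < g1" "w i \<noteq> 0"
  shows "0 < schur Q1 {..<g1} g1 (g1 + 1) w"
proof (rule hex_block.schur_pos[OF hex_block_left])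
  fix w' :: "nat \<Rightarrow> real"
  assume "\<exists>j\<in>insert g1 (insert (g1 + 1) {..<g1}). w' j \<noteq> 0"
  then have "\<exists>j\<in>{..<g1 + 2}. w' j \<noteq> 0"
    by (simp only: lessThan_add_two_eq_left)
  then have "\<exists>j<g1 + 2. w' j \<noteq> 0"
    by (meson lessThan_iff)
  from ws1_dest(3)[OF this] show "0 < qform Q1 (insert g1 (insert (g1 + 1) {..<g1})) w'"
    by (simp only: lessThan_add_two_eq_left)
qed (use assms in auto)

lemma schur_right_pos:
  assumes "k \<in> {2..<g2 + 2}" "w k \<noteq> 0"
  shows "0 < schur Q2 {2..<g2 + 2} 0 1 w"
proof (rule hex_block.schur_pos[OF hex_block_right])
  fix w' :: "nat \<Rightarrow> real"
  assume "\<exists>j\<in>insert 0 (insert 1 {2..<g2 + 2}). w' j \<noteq> 0"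
  then have "\<exists>j<g2 + 2. w' j \<noteq> 0"
    by auto
  from ws2_dest(3)[OF this] show "0 < qform Q2 (insert 0 (insert 1 {2..<g2 + 2})) w'"
    by (simp only: lessThan_add_two_eq_right)
qed (use assms in auto)

lemma schur_left_of_int_ge:
  assumes "i < g1" "f i \<noteq> 0"
  shows "2/3 \<le> schur Q1 {..<g1} g1 (g1 + 1) (\<lambda>j. of_int (f j))"
proof (rule hex_block.schur_of_int_ge[OF hex_block_left])
  fix f' :: "nat \<Rightarrow> int"
  assume "\<exists>j\<in>insert g1 (insert (g1 + 1) {..<g1}). f' j \<noteq> 0"
  then have "\<exists>j\<in>{..<g1 + 2}. f' j \<noteq> 0"
    by (simp only: lessThan_add_two_eq_left)
  then have "\<exists>j<g1 + 2. f' j \<noteq> 0"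
    by (meson lessThan_iff)
  from ws1_dest(4)[OF this] show "1 \<le> qform Q1 (insert g1 (insert (g1 + 1) {..<g1})) (\<lambda>j. of_int (f' j))"
    by (simp only: lessThan_add_two_eq_left)
qed (use assms in auto)

lemma schur_right_of_int_ge:
  assumes "k \<in> {2..<g2 + 2}" "f k \<noteq> 0"
  shows "2/3 \<le> schur Q2 {2..<g2 + 2} 0 1 (\<lambda>j. of_int (f j))"
proof (rule hex_block.schur_of_int_ge[OF hex_block_right])
  fix f' :: "nat \<Rightarrow> int"
  assume "\<exists>j\<in>insert 0 (insert 1 {2..<g2 + 2}). f' j \<noteq> 0"
  then have "\<exists>j<g2 + 2. f' j \<noteq> 0"
    by auto
  from ws2_dest(4)[OF this] show "1 \<le> qform Q2 (insert 0 (insert 1 {2..<g2 + 2})) (\<lambda>j. of_int (f' j))"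
    by (simp only: lessThan_add_two_eq_right)
qed (use assms in auto)

lemma bform_glued_cross:
  "bform G {..<g1} ((+) g1 ` {2..<g2 + 2}) w =
     4/3 * (lform Q1 {..<g1} g1 w * lform Q2 {2..<g2 + 2} 0 (\<lambda>k. w (g1 + k))
          + lform Q1 {..<g1} (g1 + 1) w * lform Q2 {2..<g2 + 2} 1 (\<lambda>k. w (g1 + k)))
   + 2/3 * (lform Q1 {..<g1} g1 w * lform Q2 {2..<g2 + 2} 1 (\<lambda>k. w (g1 + k))
          + lform Q1 {..<g1} (g1 + 1) w * lform Q2 {2..<g2 + 2} 0 (\<lambda>k. w (g1 + k)))"
proof -
  have sum_sum_mult: "(\<Sum>i\<in>A. \<Sum>k\<in>K. c * (f i * g k)) = c * (sum f A * sum g K)"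
    for A K :: "nat set" and c :: real and f g
    unfolding sum_product by (simp add: sum_distrib_left)
  have "bform G {..<g1} ((+) g1 ` {2..<g2 + 2}) w
      = (\<Sum>i<g1. \<Sum>k\<in>{2..<g2 + 2}. w i * G $$ (i, g1 + k) * w (g1 + k))"
    unfolding bform_def by (simp only: sum.reindex[OF inj_on_add] comp_def)
  also have "\<dots> = (\<Sum>i<g1. \<Sum>k\<in>{2..<g2 + 2}.
        4/3 * ((w i * Q1 $$ (i, g1)) * (w (g1 + k) * Q2 $$ (k, 0)))
      + 4/3 * ((w i * Q1 $$ (i, g1 + 1)) * (w (g1 + k) * Q2 $$ (k, 1)))
      + 2/3 * ((w i * Q1 $$ (i, g1)) * (w (g1 + k) * Q2 $$ (k, 1)))
      + 2/3 * ((w i * Q1 $$ (i, g1 + 1)) * (w (g1 + k) * Q2 $$ (k, 0))))"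
    by (intro sum.cong refl) (simp add: glued_cross; simp add: field_simps)
  finally show ?thesis
    unfolding lform_def sum.distrib sum_sum_mult by (simp add: algebra_simps)
qed

lemma schur_glued:
  "schur G ({..<g1} \<union> (+) g1 ` {2..<g2 + 2}) g1 (g1 + 1) w
     = schur Q1 {..<g1} g1 (g1 + 1) w + schur Q2 {2..<g2 + 2} 0 1 (\<lambda>k. w (g1 + k))"
proof -
  let ?X = "{..<g1}" and ?Y = "{2..<g2 + 2}" and ?w = "\<lambda>k. w (g1 + k)"
  have disjoint: "?X \<inter> (+) g1 ` ?Y = {}"
    by auto
  have left_lform: "lform G ?X k w = lform Q1 ?X k w" if "k < g1 + 2" for k
    using that by (intro lform_cong refl) (simp add: glued_left)
  have right_lform: "lform G ((+) g1 ` ?Y) (g1 + k) w = lform Q2 ?Y k ?w" if "k < 2" for k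
    using lform_reindex[of "(+) g1" ?Y G k Q2 w] that by (simp add: glued_right comp_def)
  have lform_u: "lform G (?X \<union> (+) g1 ` ?Y) g1 w = lform Q1 ?X g1 w + lform Q2 ?Y 0 ?w"
    using lform_Un[OF _ _ disjoint] left_lform[of g1] right_lform[of 0] by simp
  have lform_v: "lform G (?X \<union> (+) g1 ` ?Y) (g1 + 1) w = lform Q1 ?X (g1 + 1) w + lform Q2 ?Y 1 ?w"
    using lform_Un[OF _ _ disjoint] left_lform[of "g1 + 1"] right_lform[of 1] by simp
  have "qform G ?X w = qform Q1 ?X w"
    by (intro qform_cong refl) (simp add: glued_left)
  moreover have "qform G ((+) g1 ` ?Y) w = qform Q2 ?Y ?w"
    using qform_reindex[of "(+) g1" ?Y G Q2 w] by (simp add: glued_right comp_def)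
  moreover have "symmetric_on G (?X \<union> (+) g1 ` ?Y)"
    using glued_symmetric by (rule symmetric_on_subset) auto
  ultimately have "qform G (?X \<union> (+) g1 ` ?Y) w = qform Q1 ?X w + qform Q2 ?Y ?w
      + 2 * bform G ?X ((+) g1 ` ?Y) w"
    using qform_Un[OF _ _ disjoint] by simp
  then show ?thesis
    unfolding schur_def lform_u lform_v bform_glued_cross
    by (simp add: power2_eq_square algebra_simps)
qed

lemma glued_qform_ge_schur:
  "schur Q1 {..<g1} g1 (g1 + 1) w + schur Q2 {2..<g2 + 2} 0 1 (\<lambda>k. w (g1 + k))
     \<le> qform G {..<g1 + g2 + 2} w"
  using hex_block.schur_le_qform[OF hex_block_glued, of w]
  unfolding schur_glued lessThan_glued_eq[symmetric] .

lemma qform_glued_left: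
  assumes "\<forall>i\<in>{g1 + 2..<g1 + g2 + 2}. w i = 0"
  shows "qform G {..<g1 + g2 + 2} w = qform Q1 {..<g1 + 2} w"
proof -
  have "qform G {..<g1 + g2 + 2} w = qform G {..<g1 + 2} w"
    by (rule qform_vanishing_outside) (use assms in auto)
  also have "\<dots> = qform Q1 {..<g1 + 2} w"
    by (intro qform_cong refl) (simp add: glued_left)
  finally show ?thesis .
qed

lemma qform_glued_right:
  assumes "\<forall>i<g1. w i = 0"
  shows "qform G {..<g1 + g2 + 2} w = qform Q2 {..<g2 + 2} (\<lambda>k. w (g1 + k))"
proof -
  have image: "(+) g1 ` {..<g2 + 2} = {g1..<g1 + g2 + 2}"
    unfolding atLeast0LessThan[symmetric] image_add_atLeastLessThan by (simp add: ac_simps)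
  have "qform G {..<g1 + g2 + 2} w = qform G ((+) g1 ` {..<g2 + 2}) w"
    unfolding image by (rule qform_vanishing_outside) (use assms in auto)
  also have "\<dots> = qform Q2 {..<g2 + 2} (\<lambda>k. w (g1 + k))"
    using qform_reindex[of "(+) g1" "{..<g2 + 2}" G Q2 w] by (simp add: glued_right comp_def)
  finally show ?thesis .
qed

lemma glued_pos:
  assumes "\<exists>i<g1 + g2 + 2. w i \<noteq> 0"
  shows "0 < qform G {..<g1 + g2 + 2} w"
proof -
  obtain i where i: "i < g1 + g2 + 2" "w i \<noteq> 0"
    using assms by blast
  show ?thesis
  proof (cases rule: glued_support_cases[of g1 g2 w])
    case 1
    then have "\<exists>i<g1 + 2. w i \<noteq> 0"
      using i by (metis atLeastLessThan_iff not_less)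
    then show ?thesis
      using 1 qform_glued_left ws1_dest(3) by simp
  next
    case 2
    then have "g1 \<le> i"
      using i by (meson not_less)
    then have "\<exists>k<g2 + 2. w (g1 + k) \<noteq> 0"
      using i by (intro exI[of _ "i - g1"]) auto
    then show ?thesis
      using 2 qform_glued_right ws2_dest(3) by simp
  next
    case 3
    then obtain i k where "i < g1" "w i \<noteq> 0" "k \<in> {2..<g2 + 2}" "w (g1 + k) \<noteq> 0"
      by blast
    then have "0 < schur Q1 {..<g1} g1 (g1 + 1) w + schur Q2 {2..<g2 + 2} 0 1 (\<lambda>k. w (g1 + k))"
      using schur_left_pos schur_right_pos[of k "\<lambda>k. w (g1 + k)"] by (simp add: add_pos_pos)
    also have "\<dots> \<le> qform G {..<g1 + g2 + 2} w"
      by (rule glued_qform_ge_schur)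
    finally show ?thesis .
  qed
qed

lemma glued_lattice:
  assumes "\<exists>i<g1 + g2 + 2. f i \<noteq> 0"
  shows "1 \<le> qform G {..<g1 + g2 + 2} (\<lambda>i. of_int (f i))
    \<and> (qform G {..<g1 + g2 + 2} (\<lambda>i. of_int (f i)) = 1
         \<longleftrightarrow> signed_column (matA g1 n1 g2 n2 B b1 b2 C c1 c2) f)"
proof -
  let ?q = "qform G {..<g1 + g2 + 2} (\<lambda>i. of_int (f i))"
  obtain i where i: "i < g1 + g2 + 2" "f i \<noteq> 0"
    using assms by blast
  have left: "1 \<le> ?q \<and> (?q = 1 \<longleftrightarrow> signed_column (matA1 g1 n1 B b1 b2) f)"
    if zero: "\<forall>i\<in>{g1 + 2..<g1 + g2 + 2}. f i = 0"
  proof -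
    have "\<exists>i<g1 + 2. f i \<noteq> 0"
      using i zero by (metis atLeastLessThan_iff not_less)
    then show ?thesis
      using zero qform_glued_left ws1_dest(4,5) by simp
  qed
  have right: "1 \<le> ?q \<and> (?q = 1 \<longleftrightarrow> signed_column (matA2 g2 n2 C c1 c2) (\<lambda>k. f (g1 + k)))"
    if zero: "\<forall>i<g1. f i = 0"
  proof -
    have "g1 \<le> i"
      using i zero by (meson not_less)
    then have "\<exists>k<g2 + 2. f (g1 + k) \<noteq> 0"
      using i by (intro exI[of _ "i - g1"]) auto
    then show ?thesis
      using zero qform_glued_right ws2_dest(4,5) by simp
  qed
  show ?thesis
  proof (cases rule: glued_support_cases[of g1 g2 f])
    case 3
    then obtain i k where left_nonzero: "i < g1" "f i \<noteq> 0"
      and right_nonzero: "k \<in> {2..<g2 + 2}" "f (g1 + k) \<noteq> 0"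
      by blast
    have "4/3 \<le> ?q"
      using schur_left_of_int_ge[of i f, OF left_nonzero]
        schur_right_of_int_ge[of k "\<lambda>k. f (g1 + k)", OF right_nonzero]
        glued_qform_ge_schur[of "\<lambda>i. of_int (f i)"] by simp
    moreover have "\<not> signed_column (matA g1 n1 g2 n2 B b1 b2 C c1 c2) f"
      unfolding signed_column_matA using left_nonzero right_nonzero by force
    ultimately show ?thesis
      by simp
  qed (use left right in \<open>auto simp: signed_column_matA\<close>)
qed

lemma well_suited_glued: "well_suited G (matA g1 n1 g2 n2 B b1 b2 C c1 c2)"
  unfolding well_suited_iff[OF dim_matA(1)]
  using glued_carrier glued_symmetric glued_pos glued_lattice by blast

end

theorem lemma4p2p5:
  fixes g1 n1 g2 n2 :: nat
    and B C :: "int mat" and b1 b2 c1 c2 :: "int vec"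
    and Qb1 Qb2 :: "real mat"
  assumes B: "B \<in> carrier_mat g1 n1" and C: "C \<in> carrier_mat g2 n2"
    and b: "b1 \<in> carrier_vec n1" "b2 \<in> carrier_vec n1"
    and c: "c1 \<in> carrier_vec n2" "c2 \<in> carrier_vec n2"
    and tu1: "totally_unimodular (matA1 g1 n1 B b1 b2)" and s1: "simple_mat (matA1 g1 n1 B b1 b2)"
    and tu2: "totally_unimodular (matA2 g2 n2 C c1 c2)" and s2: "simple_mat (matA2 g2 n2 C c1 c2)"
    and w1: "well_suited Qb1 (matA1 g1 n1 B b1 b2)"
    and w2: "well_suited Qb2 (matA2 g2 n2 C c1 c2)"
  shows "Qb1 $$ (g1, g1) = 1 \<and> Qb1 $$ (g1, g1 + 1) = - 1/2 \<and>
         Qb1 $$ (g1 + 1, g1) = - 1/2 \<and> Qb1 $$ (g1 + 1, g1 + 1) = 1 \<and>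
         Qb2 $$ (0, 0) = 1 \<and> Qb2 $$ (0, 1) = - 1/2 \<and>
         Qb2 $$ (1, 0) = - 1/2 \<and> Qb2 $$ (1, 1) = 1 \<and>
         well_suited (glued_form g1 g2 Qb1 Qb2) (matA g1 n1 g2 n2 B b1 b2 C c1 c2)"
proof -
  interpret gluing g1 n1 g2 n2 B C b1 b2 c1 c2 Qb1 Qb2
    using w1 w2 by unfold_locales
  show ?thesis
    using block1 block2 well_suited_glued by simp
qed

end
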